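(* In the setting of the context, suppose every subcontroller is $u_i=\hat K_iR_i\begin{bmatrix} y_i\\ v_i\end{bmatrix}$ with $R_i=\begin{bmatrix} I&-G_{y_iv_i}\end{bmatrix}$ and $\hat K_i$ a stabilizing controller for $G_{y_iu_i}$, and let $\boldsymbol L$ be an interaction for which $\boldsymbol G_{\rm pre}$ is internally stable. Let $\delta\ge0$ satisfy $\|\boldsymbol G_{\boldsymbol{zv}}(I-\boldsymbol L\boldsymbol G_{\boldsymbol{wv}})^{-1}\boldsymbol L\|_\infty\le\delta$. If for each $i$ $$\|\hat M_{z_id_i}(\hat K_i)\|_\infty\le\alpha_i,\qquad \|\hat M_{w_id_i}(\hat K_i)\|_\infty\le\beta_i,$$ then the closed-loop map $\boldsymbol T_{\boldsymbol{zd}}:\boldsymbol d\mapsto\boldsymbol z$ of the entire network system satisfies $$\|\boldsymbol T_{\boldsymbol{zd}}\|_\infty\le\max_i\alpha_i+\delta\max_i\beta_i.$$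
   Context: For $i=1,\dots,N$, subsystem $G_i$ is a proper real rational transfer matrix with inputs $(v_i,d_i,u_i)$ (interaction, disturbance, control) and outputs $(w_i,z_i,y_i)$ (interaction, evaluation, measurement), $G_{a_ib_i}$ the block from $b_i$ to $a_i$; $v_i$ is measurable. Stacked signals $\boldsymbol v=\mathrm{col}(v_1,\dots,v_N)$ etc.; interaction $\boldsymbol v=\boldsymbol L\boldsymbol w$, $\boldsymbol L$ proper real rational. $\boldsymbol G_{\boldsymbol{wv}}:=\mathrm{diag}(G_{w_iv_i})$, $\boldsymbol G_{\boldsymbol{zv}}:=\mathrm{diag}(G_{z_iv_i})$. The preexisting system $\boldsymbol G_{\rm pre}$ is the loop $\boldsymbol w=\boldsymbol G_{\boldsymbol{wv}}\boldsymbol v$, $\boldsymbol v=\boldsymbol L\boldsymbol w$. All feedback systems are well-posed. $\hat M_{z_id_i}(\hat K_i):=G_{z_id_i}+G_{z_iu_i}\hat K_i(I-G_{y_iu_i}\hat K_i)^{-1}G_{y_id_i}$, $\hat M_{w_id_i}(\hat K_i):=G_{w_id_i}+G_{w_iu_i}\hat K_i(I-G_{y_iu_i}\hat K_i)^{-1}G_{y_id_i}$. $\hat K_i$ is a stabilizing controller for $G_{y_iu_i}$ if the positive feedback loop $y_i=G_{y_iu_i}u_i$, $u_i=\hat K_iy_i$ is internally stable. $\|\cdot\|_\infty$ is the $\mathcal H_\infty$-norm. *)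

theory Defs
  imports "HOL-Analysis.Analysis" "HOL-Computational_Algebra.Fraction_Field"
          "HOL-Computational_Algebra.Polynomial"
          "Jordan_Normal_Form.Gauss_Jordan_Elimination"
begin

text \<open>A real rational transfer function is an element of the field of fractions
  of real polynomials (in the Laplace variable s).\<close>
type_synonym tf = "real poly fract"

definition cpoly :: "real poly \<Rightarrow> complex \<Rightarrow> complex" where
  "cpoly p s = poly (map_poly complex_of_real p) s"

definition is_pole_tf :: "tf \<Rightarrow> complex \<Rightarrow> bool" where
  "is_pole_tf x s \<longleftrightarrow> (\<forall>p q. q \<noteq> 0 \<and> x = Fract p q \<longrightarrow> cpoly q s = 0)"

text \<open>Value of x at a non-pole s (independent of the chosen representation).\<close>
definition eval_tf :: "tf \<Rightarrow> complex \<Rightarrow> complex" where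
  "eval_tf x s = (SOME v. \<exists>p q. q \<noteq> 0 \<and> x = Fract p q \<and> cpoly q s \<noteq> 0 \<and> v = cpoly p s / cpoly q s)"

definition proper_tf :: "tf \<Rightarrow> bool" where
  "proper_tf x \<longleftrightarrow> (\<exists>p q. q \<noteq> 0 \<and> x = Fract p q \<and> degree p \<le> degree q)"

definition stable_tf :: "tf \<Rightarrow> bool" where
  "stable_tf x \<longleftrightarrow> proper_tf x \<and> (\<forall>s. Re s \<ge> 0 \<longrightarrow> \<not> is_pole_tf x s)"

definition proper_mat :: "tf mat \<Rightarrow> bool" where
  "proper_mat A \<longleftrightarrow> (\<forall>i<dim_row A. \<forall>j<dim_col A. proper_tf (A $$ (i,j)))"

definition stable_mat :: "tf mat \<Rightarrow> bool" where
  "stable_mat A \<longleftrightarrow> (\<forall>i<dim_row A. \<forall>j<dim_col A. stable_tf (A $$ (i,j)))"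

definition eval_mat :: "tf mat \<Rightarrow> complex \<Rightarrow> complex mat" where
  "eval_mat A s = mat (dim_row A) (dim_col A) (\<lambda>(i,j). eval_tf (A $$ (i,j)) s)"

definition vnorm :: "complex vec \<Rightarrow> real" where
  "vnorm x = sqrt (\<Sum>i<dim_vec x. (cmod (x $ i))\<^sup>2)"

definition opnorm :: "complex mat \<Rightarrow> real" where
  "opnorm A = Sup {vnorm (A *\<^sub>v x) | x. x \<in> carrier_vec (dim_col A) \<and> vnorm x \<le> 1}"

definition hinf_norm :: "tf mat \<Rightarrow> ereal" where
  "hinf_norm A = (if stable_mat A
      then (SUP \<omega>::real. ereal (opnorm (eval_mat A (\<i> * complex_of_real \<omega>)))) else \<infinity>)"

definition minv :: "tf mat \<Rightarrow> tf mat" where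
  "minv A = the (mat_inverse A)"

text \<open>Positive feedback loop y = P u, u = K y with P of size ny x nu and K of size nu x ny. Internally stable: the map from injected
  signals (e1,e2) to (y,u) for y = P u + e1, u = K y + e2 is in RH-infinity.\<close>
definition loop_mat :: "tf mat \<Rightarrow> tf mat \<Rightarrow> tf mat" where
  "loop_mat P K = four_block_mat (1\<^sub>m (dim_row P)) (- P) (- K) (1\<^sub>m (dim_row K))"

definition well_posed_fb :: "tf mat \<Rightarrow> tf mat \<Rightarrow> bool" where
  "well_posed_fb P K \<longleftrightarrow> invertible_mat (loop_mat P K)"

definition internally_stable_fb :: "tf mat \<Rightarrow> tf mat \<Rightarrow> bool" where
  "internally_stable_fb P K \<longleftrightarrow> well_posed_fb P K \<and> stable_mat (minv (loop_mat P K))"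

definition stabilizing :: "tf mat \<Rightarrow> tf mat \<Rightarrow> bool" where
  "stabilizing K P \<longleftrightarrow> internally_stable_fb P K"

fun diag_blocks :: "(nat \<Rightarrow> tf mat) \<Rightarrow> nat \<Rightarrow> tf mat" where
  "diag_blocks F 0 = 0\<^sub>m 0 0"
| "diag_blocks F (Suc n) = four_block_mat (diag_blocks F n)
      (0\<^sub>m (dim_row (diag_blocks F n)) (dim_col (F n)))
      (0\<^sub>m (dim_row (F n)) (dim_col (diag_blocks F n))) (F n)"

fun stack_rows :: "nat \<Rightarrow> (nat \<Rightarrow> tf mat) \<Rightarrow> nat \<Rightarrow> tf mat" where
  "stack_rows c F 0 = 0\<^sub>m 0 c"
| "stack_rows c F (Suc n) = stack_rows c F n @\<^sub>r F n"

definition append_cols :: "tf mat \<Rightarrow> tf mat \<Rightarrow> tf mat" where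
  "append_cols A B = four_block_mat A B (0\<^sub>m 0 (dim_col A)) (0\<^sub>m 0 (dim_col B))"

definition offset :: "(nat \<Rightarrow> nat) \<Rightarrow> nat \<Rightarrow> nat" where
  "offset n i = (\<Sum>j<i. n j)"

text \<open>The block of rows of the identity of size offset nd N belonging to d_i,
  i.e. the transfer matrix from the stacked disturbance d to d_i.\<close>
definition d_block :: "(nat \<Rightarrow> nat) \<Rightarrow> nat \<Rightarrow> nat \<Rightarrow> tf mat" where
  "d_block nd N i = mat (nd i) (offset nd N) (\<lambda>(r,c). if c = offset nd i + r then 1 else 0)"

definition Mhat :: "tf mat \<Rightarrow> tf mat \<Rightarrow> tf mat \<Rightarrow> tf mat \<Rightarrow> tf mat \<Rightarrow> tf mat" where
  "Mhat Gad Gau Gyu Gyd K =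
     Gad + Gau * K * minv (1\<^sub>m (dim_row Gyu) - Gyu * K) * Gyd"

definition Rmat :: "tf mat \<Rightarrow> tf mat" where
  "Rmat Gyv = append_cols (1\<^sub>m (dim_row Gyv)) (- Gyv)"

text \<open>Signals are represented by their transfer matrices from the stacked disturbance d
  (which has offset nd N components).\<close>
definition network_solution ::
  "nat \<Rightarrow> (nat \<Rightarrow> nat) \<Rightarrow> (nat \<Rightarrow> nat) \<Rightarrow> (nat \<Rightarrow> nat) \<Rightarrow> (nat \<Rightarrow> nat) \<Rightarrow> (nat \<Rightarrow> nat) \<Rightarrow> (nat \<Rightarrow> nat) \<Rightarrow>
   (nat \<Rightarrow> tf mat) \<Rightarrow> (nat \<Rightarrow> tf mat) \<Rightarrow> (nat \<Rightarrow> tf mat) \<Rightarrow>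
   (nat \<Rightarrow> tf mat) \<Rightarrow> (nat \<Rightarrow> tf mat) \<Rightarrow> (nat \<Rightarrow> tf mat) \<Rightarrow>
   (nat \<Rightarrow> tf mat) \<Rightarrow> (nat \<Rightarrow> tf mat) \<Rightarrow> (nat \<Rightarrow> tf mat) \<Rightarrow>
   (nat \<Rightarrow> tf mat) \<Rightarrow> tf mat \<Rightarrow>
   (nat \<Rightarrow> tf mat) \<Rightarrow> (nat \<Rightarrow> tf mat) \<Rightarrow> (nat \<Rightarrow> tf mat) \<Rightarrow> (nat \<Rightarrow> tf mat) \<Rightarrow> (nat \<Rightarrow> tf mat) \<Rightarrow> bool" where
  "network_solution N nv nd nu nw nz ny
     Gwv Gwd Gwu Gzv Gzd Gzu Gyv Gyd Gyu K L V W Z Y U \<longleftrightarrow>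
    (let c = offset nd N in
     (\<forall>i<N. V i \<in> carrier_mat (nv i) c \<and> W i \<in> carrier_mat (nw i) c \<and>
            Z i \<in> carrier_mat (nz i) c \<and> Y i \<in> carrier_mat (ny i) c \<and>
            U i \<in> carrier_mat (nu i) c \<and>
            W i = Gwv i * V i + Gwd i * d_block nd N i + Gwu i * U i \<and>
            Z i = Gzv i * V i + Gzd i * d_block nd N i + Gzu i * U i \<and>
            Y i = Gyv i * V i + Gyd i * d_block nd N i + Gyu i * U i \<and>
            U i = K i * Rmat (Gyv i) * (Y i @\<^sub>r V i)) \<and>
     stack_rows c V N = L * stack_rows c W N)"

definition network_well_posed where
  "network_well_posed N nv nd nu nw nz ny Gwv Gwd Gwu Gzv Gzd Gzu Gyv Gyd Gyu K L \<longleftrightarrow>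
    (\<exists>V W Z Y U. network_solution N nv nd nu nw nz ny
        Gwv Gwd Gwu Gzv Gzd Gzu Gyv Gyd Gyu K L V W Z Y U) \<and>
    (\<forall>V W Z Y U V' W' Z' Y' U'.
      network_solution N nv nd nu nw nz ny Gwv Gwd Gwu Gzv Gzd Gzu Gyv Gyd Gyu K L V W Z Y U \<and>
      network_solution N nv nd nu nw nz ny Gwv Gwd Gwu Gzv Gzd Gzu Gyv Gyd Gyu K L V' W' Z' Y' U'
      \<longrightarrow> (\<forall>i<N. V i = V' i \<and> W i = W' i \<and> Z i = Z' i \<and> Y i = Y' i \<and> U i = U' i))"

end

theory Submission
  imports Defs "Jordan_Normal_Form.Determinant" "Jordan_Normal_Form.Char_Poly"
begin

text \<open>Closing the local loop \<open>u\<^sub>i = K\<^sub>i (y\<^sub>i - G\<^sub>y\<^sub>v v\<^sub>i)\<close> of each subsystem eliminates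
  \<open>y\<^sub>i\<close> and \<open>u\<^sub>i\<close>: the remaining outputs are \<open>w\<^sub>i = G\<^sub>w\<^sub>v v\<^sub>i + M\<^sub>w\<^sub>d d\<^sub>i\<close> and
  \<open>z\<^sub>i = G\<^sub>z\<^sub>v v\<^sub>i + M\<^sub>z\<^sub>d d\<^sub>i\<close>, with \<open>M\<close> the local closed loops.  Solving the interconnection
  \<open>v = L w\<close> for \<open>v\<close> then gives
  \<open>T\<^sub>z\<^sub>d = G\<^sub>z\<^sub>v (I - L G\<^sub>w\<^sub>v)\<^sup>-\<^sup>1 L diag(M\<^sub>w\<^sub>d) + diag(M\<^sub>z\<^sub>d)\<close>, and the bound follows
  from the triangle inequality and submultiplicativity of the \<open>H\<^sub>\<infinity>\<close>-norm, together with the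
  fact that the norm of a block-diagonal system is the largest norm of its blocks.\<close>

section \<open>Evaluation of rational transfer functions\<close>

interpretation of_real_poly_hom: map_poly_idom_hom "of_real :: real \<Rightarrow> complex" ..

lemma cpoly_0 [simp]: "cpoly 0 s = 0"
  and cpoly_1 [simp]: "cpoly 1 s = 1"
  and cpoly_add [simp]: "cpoly (p + q) s = cpoly p s + cpoly q s"
  and cpoly_mult [simp]: "cpoly (p * q) s = cpoly p s * cpoly q s"
  unfolding cpoly_def by (simp_all add: hom_distribs)

lemma not_is_pole_tf_iff: "\<not> is_pole_tf x s \<longleftrightarrow> (\<exists>p q. q \<noteq> 0 \<and> x = Fract p q \<and> cpoly q s \<noteq> 0)"
  unfolding is_pole_tf_def by blast

lemma not_is_pole_tf_0: "\<not> is_pole_tf 0 s"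
  unfolding not_is_pole_tf_iff by (intro exI[of _ 0] exI[of _ 1]) (simp add: Zero_fract_def)

lemma not_is_pole_tf_add:
  assumes "\<not> is_pole_tf x s" "\<not> is_pole_tf y s" shows "\<not> is_pole_tf (x + y) s"
proof -
  from assms obtain p q p' q' where "q \<noteq> 0" "x = Fract p q" "cpoly q s \<noteq> 0"
    "q' \<noteq> 0" "y = Fract p' q'" "cpoly q' s \<noteq> 0" unfolding not_is_pole_tf_iff by blast
  then show ?thesis unfolding not_is_pole_tf_iff
    by (intro exI[of _ "p * q' + p' * q"] exI[of _ "q * q'"]) simp
qed

lemma not_is_pole_tf_mult:
  assumes "\<not> is_pole_tf x s" "\<not> is_pole_tf y s" shows "\<not> is_pole_tf (x * y) s"
proof -
  from assms obtain p q p' q' where "q \<noteq> 0" "x = Fract p q" "cpoly q s \<noteq> 0"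
    "q' \<noteq> 0" "y = Fract p' q'" "cpoly q' s \<noteq> 0" unfolding not_is_pole_tf_iff by blast
  then show ?thesis unfolding not_is_pole_tf_iff
    by (intro exI[of _ "p * p'"] exI[of _ "q * q'"]) simp
qed

lemma eval_tf_Fract:
  assumes q: "q \<noteq> 0" "cpoly q s \<noteq> 0"
  shows "eval_tf (Fract p q) s = cpoly p s / cpoly q s"
proof -
  let ?P = "\<lambda>v. \<exists>p' q'. q' \<noteq> 0 \<and> Fract p q = Fract p' q' \<and> cpoly q' s \<noteq> 0 \<and>
                        v = cpoly p' s / cpoly q' s"
  have "?P (cpoly p s / cpoly q s)" using q by blast
  then have "?P (eval_tf (Fract p q) s)" unfolding eval_tf_def by (rule someI)
  then obtain p' q' where h: "q' \<noteq> 0" "Fract p q = Fract p' q'" "cpoly q' s \<noteq> 0"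
    "eval_tf (Fract p q) s = cpoly p' s / cpoly q' s" by blast
  from h(2) have "p * q' = p' * q" using eq_fract(1)[OF q(1) h(1)] by simp
  then have "cpoly p s * cpoly q' s = cpoly p' s * cpoly q s"
    by (metis cpoly_mult)
  with h(3,4) q(2) show ?thesis by (simp add: frac_eq_eq algebra_simps)
qed

lemma eval_tf_0 [simp]: "eval_tf 0 s = 0"
  using eval_tf_Fract[of 1 s 0] by (simp add: Zero_fract_def)

lemma eval_tf_add:
  assumes "\<not> is_pole_tf x s" "\<not> is_pole_tf y s"
  shows "eval_tf (x + y) s = eval_tf x s + eval_tf y s"
proof -
  from assms obtain p q p' q' where h: "q \<noteq> 0" "x = Fract p q" "cpoly q s \<noteq> 0"
    "q' \<noteq> 0" "y = Fract p' q'" "cpoly q' s \<noteq> 0" unfolding not_is_pole_tf_iff by blast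
  have "x + y = Fract (p * q' + p' * q) (q * q')" using h by simp
  with h show ?thesis by (simp add: eval_tf_Fract field_simps)
qed

lemma eval_tf_mult:
  assumes "\<not> is_pole_tf x s" "\<not> is_pole_tf y s"
  shows "eval_tf (x * y) s = eval_tf x s * eval_tf y s"
proof -
  from assms obtain p q p' q' where h: "q \<noteq> 0" "x = Fract p q" "cpoly q s \<noteq> 0"
    "q' \<noteq> 0" "y = Fract p' q'" "cpoly q' s \<noteq> 0" unfolding not_is_pole_tf_iff by blast
  have "x * y = Fract (p * p') (q * q')" using h by simp
  with h show ?thesis by (simp add: eval_tf_Fract)
qed

lemma proper_tf_0: "proper_tf 0"
  unfolding proper_tf_def by (intro exI[of _ 0] exI[of _ 1]) (simp add: Zero_fract_def)

lemma proper_tf_add: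
  assumes "proper_tf x" "proper_tf y" shows "proper_tf (x + y)"
proof -
  from assms obtain p q p' q' where h: "q \<noteq> 0" "x = Fract p q" "degree p \<le> degree q"
    "q' \<noteq> 0" "y = Fract p' q'" "degree p' \<le> degree q'" unfolding proper_tf_def by blast
  have "degree (p * q' + p' * q) \<le> max (degree (p * q')) (degree (p' * q))"
    by (rule degree_add_le_max)
  also have "\<dots> \<le> degree (q * q')"
    using degree_mult_le[of p q'] degree_mult_le[of p' q] h by (auto simp: degree_mult_eq)
  finally show ?thesis unfolding proper_tf_def
    by (intro exI[of _ "p * q' + p' * q"] exI[of _ "q * q'"]) (use h in auto)
qed

lemma proper_tf_mult:
  assumes "proper_tf x" "proper_tf y" shows "proper_tf (x * y)"
proof -
  from assms obtain p q p' q' where h: "q \<noteq> 0" "x = Fract p q" "degree p \<le> degree q"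
    "q' \<noteq> 0" "y = Fract p' q'" "degree p' \<le> degree q'" unfolding proper_tf_def by blast
  have "degree (p * p') \<le> degree (q * q')"
    using degree_mult_le[of p p'] h by (auto simp: degree_mult_eq)
  then show ?thesis unfolding proper_tf_def
    by (intro exI[of _ "p * p'"] exI[of _ "q * q'"]) (use h in auto)
qed

lemma stable_tf_0: "stable_tf 0"
  unfolding stable_tf_def by (simp add: proper_tf_0 not_is_pole_tf_0)

lemma stable_tf_add: "stable_tf x \<Longrightarrow> stable_tf y \<Longrightarrow> stable_tf (x + y)"
  unfolding stable_tf_def using proper_tf_add not_is_pole_tf_add by blast

lemma stable_tf_mult: "stable_tf x \<Longrightarrow> stable_tf y \<Longrightarrow> stable_tf (x * y)"
  unfolding stable_tf_def using proper_tf_mult not_is_pole_tf_mult by blast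

lemma stable_tf_sum: "(\<And>i. i \<in> A \<Longrightarrow> stable_tf (f i)) \<Longrightarrow> stable_tf (sum f A)"
  by (induct A rule: infinite_finite_induct) (auto intro: stable_tf_0 stable_tf_add)

lemma stable_tf_not_is_pole: "stable_tf x \<Longrightarrow> 0 \<le> Re s \<Longrightarrow> \<not> is_pole_tf x s"
  unfolding stable_tf_def by auto

lemma eval_tf_sum:
  assumes "\<And>i. i \<in> A \<Longrightarrow> stable_tf (f i)" "0 \<le> Re s"
  shows "eval_tf (sum f A) s = (\<Sum>i\<in>A. eval_tf (f i) s)"
  using assms(1)
proof (induct A rule: infinite_finite_induct)
  case (insert x F)
  then show ?case
    using assms(2) by (simp add: eval_tf_add stable_tf_not_is_pole stable_tf_sum)
qed auto

lemma stable_mat_mult: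
  assumes "stable_mat A" "stable_mat B" "dim_col A = dim_row B"
  shows "stable_mat (A * B)"
  unfolding stable_mat_def
proof (intro allI impI)
  fix i j assume ij: "i < dim_row (A * B)" "j < dim_col (A * B)"
  have "(A * B) $$ (i,j) = (\<Sum>k\<in>{0..<dim_row B}. A $$ (i,k) * B $$ (k,j))"
    using ij assms(3) by (simp add: scalar_prod_def)
  also have "stable_tf \<dots>"
    using assms ij unfolding stable_mat_def by (intro stable_tf_sum stable_tf_mult) auto
  finally show "stable_tf ((A * B) $$ (i,j))" .
qed

lemma stable_mat_add:
  assumes "stable_mat A" "stable_mat B" "dim_row A = dim_row B" "dim_col A = dim_col B"
  shows "stable_mat (A + B)"
  using assms unfolding stable_mat_def by (auto intro: stable_tf_add)

lemma stable_mat_diag_blocks: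
  "(\<And>i. i < n \<Longrightarrow> stable_mat (F i)) \<Longrightarrow> stable_mat (diag_blocks F n)"
  by (induct n) (auto simp: stable_mat_def stable_tf_0)

lemma dim_eval_mat [simp]:
  "dim_row (eval_mat A s) = dim_row A" "dim_col (eval_mat A s) = dim_col A"
  unfolding eval_mat_def by auto

lemma index_eval_mat [simp]:
  "i < dim_row A \<Longrightarrow> j < dim_col A \<Longrightarrow> eval_mat A s $$ (i,j) = eval_tf (A $$ (i,j)) s"
  unfolding eval_mat_def by auto

lemma eval_mat_mult:
  assumes "stable_mat A" "stable_mat B" "dim_col A = dim_row B" "0 \<le> Re s"
  shows "eval_mat (A * B) s = eval_mat A s * eval_mat B s"
proof (rule eq_matI)
  fix i j assume "i < dim_row (eval_mat A s * eval_mat B s)" "j < dim_col (eval_mat A s * eval_mat B s)"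
  then have ij: "i < dim_row A" "j < dim_col B" by auto
  have stable: "stable_tf (A $$ (i,k))" "stable_tf (B $$ (k,j))" if "k < dim_row B" for k
    using assms ij that unfolding stable_mat_def by auto
  have "eval_mat (A * B) s $$ (i,j) = eval_tf (\<Sum>k\<in>{0..<dim_row B}. A $$ (i,k) * B $$ (k,j)) s"
    using ij assms(3) by (simp add: scalar_prod_def)
  also have "\<dots> = (\<Sum>k\<in>{0..<dim_row B}. eval_tf (A $$ (i,k)) s * eval_tf (B $$ (k,j)) s)"
    using stable assms(4)
    by (subst eval_tf_sum) (auto intro!: sum.cong stable_tf_mult simp: eval_tf_mult stable_tf_not_is_pole)
  also have "\<dots> = (eval_mat A s * eval_mat B s) $$ (i,j)"
    using ij assms(3) by (simp add: scalar_prod_def)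
  finally show "eval_mat (A * B) s $$ (i,j) = (eval_mat A s * eval_mat B s) $$ (i,j)" .
qed auto

lemma eval_mat_add:
  assumes "stable_mat A" "stable_mat B" "dim_row A = dim_row B" "dim_col A = dim_col B" "0 \<le> Re s"
  shows "eval_mat (A + B) s = eval_mat A s + eval_mat B s"
  using assms unfolding stable_mat_def
  by (intro eq_matI) (auto simp: eval_tf_add stable_tf_not_is_pole)

lemma eval_mat_block_diag:
  "eval_mat (four_block_mat A (0\<^sub>m (dim_row A) (dim_col D)) (0\<^sub>m (dim_row D) (dim_col A)) D) s
   = four_block_mat (eval_mat A s) (0\<^sub>m (dim_row A) (dim_col D))
       (0\<^sub>m (dim_row D) (dim_col A)) (eval_mat D s)"
  by (rule eq_matI) auto

section \<open>The spectral norm of complex matrices\<close>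

no_notation vec_nth (infixl "$" 90)

lemma vnorm_eq_L2_set: "vnorm x = L2_set (\<lambda>i. cmod (x $ i)) {..<dim_vec x}"
  unfolding vnorm_def L2_set_def by simp

lemma vnorm_nonneg [simp]: "0 \<le> vnorm x"
  unfolding vnorm_def by (simp add: sum_nonneg)

lemma vnorm_0_vec [simp]: "vnorm (0\<^sub>v n) = 0"
  unfolding vnorm_def by simp

lemma cmod_vec_index_le_vnorm: "i < dim_vec x \<Longrightarrow> cmod (x $ i) \<le> vnorm x"
  unfolding vnorm_eq_L2_set by (rule member_le_L2_set) auto

lemma vnorm_le_sum_cmod: "vnorm x \<le> (\<Sum>i<dim_vec x. cmod (x $ i))"
  unfolding vnorm_eq_L2_set by (rule L2_set_le_sum) auto

lemma vnorm_smult: "vnorm (c \<cdot>\<^sub>v x) = cmod c * vnorm x"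
  unfolding vnorm_eq_L2_set L2_set_right_distrib[OF norm_ge_zero]
  by (auto simp: norm_mult intro!: L2_set_cong)

lemma vnorm_triangle:
  assumes "dim_vec x = dim_vec y" shows "vnorm (x + y) \<le> vnorm x + vnorm y"
proof -
  have "vnorm (x + y) = L2_set (\<lambda>i. cmod (x $ i + y $ i)) {..<dim_vec x}"
    unfolding vnorm_eq_L2_set using assms by (auto intro!: L2_set_cong)
  also have "\<dots> \<le> L2_set (\<lambda>i. cmod (x $ i) + cmod (y $ i)) {..<dim_vec x}"
    by (rule L2_set_mono) (auto intro: norm_triangle_ineq)
  also have "\<dots> \<le> vnorm x + vnorm y"
    unfolding vnorm_eq_L2_set using assms by (simp add: L2_set_triangle_ineq)
  finally show ?thesis .
qed

lemma vnorm_append_vec_squared: "(vnorm (u @\<^sub>v w))\<^sup>2 = (vnorm u)\<^sup>2 + (vnorm w)\<^sup>2"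
proof -
  let ?n = "dim_vec u" and ?m = "dim_vec w"
  let ?f = "\<lambda>i. (cmod ((u @\<^sub>v w) $ i))\<^sup>2"
  have "(vnorm (u @\<^sub>v w))\<^sup>2 = sum ?f {0..<?n + ?m}"
    unfolding vnorm_def by (simp add: sum_nonneg lessThan_atLeast0)
  also have "\<dots> = sum ?f {0..<?n} + sum ?f {?n..<?n + ?m}"
    by (rule sum.atLeastLessThan_concat[symmetric]) auto
  also have "sum ?f {?n..<?n + ?m} = sum (\<lambda>i. ?f (i + ?n)) {0..<?m}"
    using sum.shift_bounds_nat_ivl[of ?f 0 ?n ?m] by (simp add: add.commute)
  also have "sum ?f {0..<?n} + \<dots> = (vnorm u)\<^sup>2 + (vnorm w)\<^sup>2"
    unfolding vnorm_def by (simp add: sum_nonneg lessThan_atLeast0)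
  finally show ?thesis .
qed

lemma bdd_above_opnorm_set:
  "bdd_above {vnorm (A *\<^sub>v x) | x. x \<in> carrier_vec (dim_col A) \<and> vnorm x \<le> 1}"
proof (rule bdd_aboveI, clarify)
  fix x :: "complex vec" assume x: "x \<in> carrier_vec (dim_col A)" "vnorm x \<le> 1"
  have "vnorm (A *\<^sub>v x) \<le> (\<Sum>i<dim_row A. cmod ((A *\<^sub>v x) $ i))"
    using vnorm_le_sum_cmod[of "A *\<^sub>v x"] by simp
  also have "\<dots> \<le> (\<Sum>i<dim_row A. \<Sum>j<dim_col A. cmod (A $$ (i,j)))"
  proof (rule sum_mono)
    fix i assume i: "i \<in> {..<dim_row A}"
    have "cmod ((A *\<^sub>v x) $ i) \<le> (\<Sum>j<dim_col A. cmod (A $$ (i,j) * x $ j))"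
      using i x by (simp add: scalar_prod_def lessThan_atLeast0 norm_sum)
    also have "\<dots> \<le> (\<Sum>j<dim_col A. cmod (A $$ (i,j)))"
    proof (rule sum_mono)
      fix j assume "j \<in> {..<dim_col A}"
      then have "cmod (x $ j) \<le> 1" using x cmod_vec_index_le_vnorm[of j x] by auto
      then show "cmod (A $$ (i,j) * x $ j) \<le> cmod (A $$ (i,j))"
        by (simp add: norm_mult mult_left_le)
    qed
    finally show "cmod ((A *\<^sub>v x) $ i) \<le> (\<Sum>j<dim_col A. cmod (A $$ (i,j)))" .
  qed
  finally show "vnorm (A *\<^sub>v x) \<le> (\<Sum>i<dim_row A. \<Sum>j<dim_col A. cmod (A $$ (i,j)))" .
qed

lemma vnorm_mult_mat_vec_le_opnorm:
  "x \<in> carrier_vec (dim_col A) \<Longrightarrow> vnorm x \<le> 1 \<Longrightarrow> vnorm (A *\<^sub>v x) \<le> opnorm A"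
  unfolding opnorm_def by (rule cSup_upper[OF _ bdd_above_opnorm_set]) auto

lemma opnorm_nonneg: "0 \<le> opnorm A"
  by (rule order_trans[OF vnorm_nonneg vnorm_mult_mat_vec_le_opnorm[of "0\<^sub>v (dim_col A)"]]) auto

lemma opnorm_le:
  assumes "\<And>x. x \<in> carrier_vec (dim_col A) \<Longrightarrow> vnorm x \<le> 1 \<Longrightarrow> vnorm (A *\<^sub>v x) \<le> b"
  shows "opnorm A \<le> b"
  unfolding opnorm_def
proof (rule cSup_least)
  show "{vnorm (A *\<^sub>v x) | x. x \<in> carrier_vec (dim_col A) \<and> vnorm x \<le> 1} \<noteq> {}"
    by (auto intro!: exI[of _ "0\<^sub>v (dim_col A)"])
qed (use assms in auto)

lemma vnorm_mult_mat_vec_le: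
  assumes x: "x \<in> carrier_vec (dim_col A)"
  shows "vnorm (A *\<^sub>v x) \<le> opnorm A * vnorm x"
proof (cases "vnorm x = 0")
  case True
  then have "x = 0\<^sub>v (dim_col A)"
    using x cmod_vec_index_le_vnorm[of _ x] by (intro eq_vecI) force+
  then show ?thesis using True by (simp add: vnorm_def scalar_prod_def)
next
  case False
  then have r: "vnorm x > 0" using vnorm_nonneg[of x] by linarith
  define y where "y = complex_of_real (1 / vnorm x) \<cdot>\<^sub>v x"
  have y: "y \<in> carrier_vec (dim_col A)" "vnorm y \<le> 1"
    using x r unfolding y_def by (auto simp: vnorm_smult norm_divide)
  have "A *\<^sub>v y = complex_of_real (1 / vnorm x) \<cdot>\<^sub>v (A *\<^sub>v x)"
    unfolding y_def by (rule mult_mat_vec[OF _ x]) auto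
  then have "vnorm (A *\<^sub>v y) = vnorm (A *\<^sub>v x) / vnorm x"
    using r by (simp add: vnorm_smult norm_divide)
  with vnorm_mult_mat_vec_le_opnorm[OF y] have "vnorm (A *\<^sub>v x) / vnorm x \<le> opnorm A" by simp
  then show ?thesis using r by (simp add: divide_le_eq mult.commute)
qed

lemma opnorm_mult_le:
  assumes "dim_col A = dim_row B"
  shows "opnorm (A * B) \<le> opnorm A * opnorm B"
proof (rule opnorm_le)
  fix x assume x: "x \<in> carrier_vec (dim_col (A * B))" "vnorm x \<le> 1"
  then have xB: "x \<in> carrier_vec (dim_col B)" by simp
  have Bx: "B *\<^sub>v x \<in> carrier_vec (dim_col A)" using assms by (intro carrier_vecI) simp
  have "vnorm ((A * B) *\<^sub>v x) = vnorm (A *\<^sub>v (B *\<^sub>v x))"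
    using assms by (subst assoc_mult_mat_vec[OF _ _ xB]) (auto intro: carrier_matI)
  also have "\<dots> \<le> opnorm A * vnorm (B *\<^sub>v x)"
    by (rule vnorm_mult_mat_vec_le[OF Bx])
  also have "\<dots> \<le> opnorm A * (opnorm B * vnorm x)"
    by (rule mult_left_mono[OF vnorm_mult_mat_vec_le[OF xB] opnorm_nonneg])
  also have "\<dots> \<le> opnorm A * opnorm B"
    by (rule mult_left_mono[OF mult_left_le[OF x(2) opnorm_nonneg] opnorm_nonneg])
  finally show "vnorm ((A * B) *\<^sub>v x) \<le> opnorm A * opnorm B" .
qed

lemma opnorm_add_le:
  assumes "dim_row A = dim_row B" "dim_col A = dim_col B"
  shows "opnorm (A + B) \<le> opnorm A + opnorm B"
proof (rule opnorm_le)
  fix x assume x: "x \<in> carrier_vec (dim_col (A + B))" "vnorm x \<le> 1"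
  then have xA: "x \<in> carrier_vec (dim_col A)" and xB: "x \<in> carrier_vec (dim_col B)"
    using assms by auto
  have "vnorm ((A + B) *\<^sub>v x) = vnorm (A *\<^sub>v x + B *\<^sub>v x)"
    using assms xA by (subst add_mult_distrib_mat_vec) auto
  also have "\<dots> \<le> vnorm (A *\<^sub>v x) + vnorm (B *\<^sub>v x)"
    using assms by (intro vnorm_triangle) simp
  also have "\<dots> \<le> opnorm A + opnorm B"
    using x(2) by (intro add_mono vnorm_mult_mat_vec_le_opnorm xA xB)
  finally show "vnorm ((A + B) *\<^sub>v x) \<le> opnorm A + opnorm B" .
qed

lemma opnorm_block_diag_le:
  assumes "opnorm A \<le> b" "opnorm D \<le> b"
  shows "opnorm (four_block_mat A (0\<^sub>m (dim_row A) (dim_col D)) (0\<^sub>m (dim_row D) (dim_col A)) D) \<le> b"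
proof (rule opnorm_le)
  let ?M = "four_block_mat A (0\<^sub>m (dim_row A) (dim_col D)) (0\<^sub>m (dim_row D) (dim_col A)) D"
  fix x assume x: "x \<in> carrier_vec (dim_col ?M)" "vnorm x \<le> 1"
  let ?a = "vec_first x (dim_col A)" and ?d = "vec_last x (dim_col D)"
  have x_split: "x = ?a @\<^sub>v ?d" using x by simp
  have "?M *\<^sub>v x = (A *\<^sub>v ?a + 0\<^sub>m (dim_row A) (dim_col D) *\<^sub>v ?d) @\<^sub>v
                   (0\<^sub>m (dim_row D) (dim_col A) *\<^sub>v ?a + D *\<^sub>v ?d)"
    by (subst x_split, rule four_block_mat_mult_vec) auto
  also have "\<dots> = (A *\<^sub>v ?a) @\<^sub>v (D *\<^sub>v ?d)"
    by (intro arg_cong2[where f = append_vec]) (auto intro!: eq_vecI simp: scalar_prod_def)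
  finally have "(vnorm (?M *\<^sub>v x))\<^sup>2 = (vnorm (A *\<^sub>v ?a))\<^sup>2 + (vnorm (D *\<^sub>v ?d))\<^sup>2"
    by (simp add: vnorm_append_vec_squared)
  also have "\<dots> \<le> (b * vnorm ?a)\<^sup>2 + (b * vnorm ?d)\<^sup>2"
    using vnorm_mult_mat_vec_le[of ?a A] vnorm_mult_mat_vec_le[of ?d D] assms
      mult_right_mono[OF assms(1) vnorm_nonneg[of ?a]] mult_right_mono[OF assms(2) vnorm_nonneg[of ?d]]
    by (intro add_mono power_mono) auto
  also have "\<dots> = b\<^sup>2 * (vnorm x)\<^sup>2"
    using vnorm_append_vec_squared[of ?a ?d] x_split by (simp add: power_mult_distrib algebra_simps)
  also have "\<dots> \<le> b\<^sup>2"
    using x by (simp add: power_le_one mult_left_le)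
  finally have "(vnorm (?M *\<^sub>v x))\<^sup>2 \<le> b\<^sup>2" .
  moreover have "0 \<le> b" using assms(1) opnorm_nonneg[of A] by linarith
  ultimately show "vnorm (?M *\<^sub>v x) \<le> b" by (rule power2_le_imp_le)
qed

section \<open>The \<open>H\<^sub>\<infinity>\<close>-norm\<close>

lemma hinf_norm_le_iff:
  "hinf_norm A \<le> ereal b \<longleftrightarrow>
     stable_mat A \<and> (\<forall>\<omega>. opnorm (eval_mat A (\<i> * complex_of_real \<omega>)) \<le> b)"
  unfolding hinf_norm_def by (simp add: SUP_le_iff)

lemma hinf_norm_le_imp_nonneg: "hinf_norm A \<le> ereal b \<Longrightarrow> 0 \<le> b"
  unfolding hinf_norm_le_iff using opnorm_nonneg order_trans by blast

lemma hinf_norm_add_le: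
  assumes "hinf_norm A \<le> ereal a" "hinf_norm B \<le> ereal b"
    and "dim_row A = dim_row B" "dim_col A = dim_col B"
  shows "hinf_norm (A + B) \<le> ereal (a + b)"
  unfolding hinf_norm_le_iff
proof (intro conjI allI)
  show "stable_mat (A + B)"
    using assms by (intro stable_mat_add) (auto simp: hinf_norm_le_iff)
  fix \<omega> :: real
  let ?s = "\<i> * complex_of_real \<omega>"
  have "opnorm (eval_mat (A + B) ?s) = opnorm (eval_mat A ?s + eval_mat B ?s)"
    using assms by (subst eval_mat_add) (auto simp: hinf_norm_le_iff)
  also have "\<dots> \<le> opnorm (eval_mat A ?s) + opnorm (eval_mat B ?s)"
    using assms by (intro opnorm_add_le) auto
  also have "\<dots> \<le> a + b"
    using assms by (intro add_mono) (auto simp: hinf_norm_le_iff)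
  finally show "opnorm (eval_mat (A + B) ?s) \<le> a + b" .
qed

lemma hinf_norm_mult_le:
  assumes A: "hinf_norm A \<le> ereal a" and B: "hinf_norm B \<le> ereal b"
    and "dim_col A = dim_row B"
  shows "hinf_norm (A * B) \<le> ereal (a * b)"
  unfolding hinf_norm_le_iff
proof (intro conjI allI)
  show "stable_mat (A * B)"
    using assms by (intro stable_mat_mult) (auto simp: hinf_norm_le_iff)
  fix \<omega> :: real
  let ?s = "\<i> * complex_of_real \<omega>"
  have "opnorm (eval_mat (A * B) ?s) = opnorm (eval_mat A ?s * eval_mat B ?s)"
    using assms by (subst eval_mat_mult) (auto simp: hinf_norm_le_iff)
  also have "\<dots> \<le> opnorm (eval_mat A ?s) * opnorm (eval_mat B ?s)"
    using assms by (intro opnorm_mult_le) auto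
  also have "\<dots> \<le> a * b"
    using A B hinf_norm_le_imp_nonneg[OF A]
    by (intro mult_mono opnorm_nonneg) (auto simp: hinf_norm_le_iff)
  finally show "opnorm (eval_mat (A * B) ?s) \<le> a * b" .
qed

lemma opnorm_eval_diag_blocks_le:
  assumes "\<And>i. i < n \<Longrightarrow> opnorm (eval_mat (F i) s) \<le> b" "0 \<le> b"
  shows "opnorm (eval_mat (diag_blocks F n) s) \<le> b"
  using assms(1)
proof (induct n)
  case 0
  show ?case using assms(2) by (intro opnorm_le) (auto simp: vnorm_def)
next
  case (Suc n)
  then show ?case
    unfolding diag_blocks.simps eval_mat_block_diag
    using opnorm_block_diag_le[of "eval_mat (diag_blocks F n) s" b "eval_mat (F n) s"] by simp
qed

lemma hinf_norm_diag_blocks_le: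
  assumes "\<And>i. i < n \<Longrightarrow> hinf_norm (F i) \<le> ereal b" "0 \<le> b"
  shows "hinf_norm (diag_blocks F n) \<le> ereal b"
  using assms unfolding hinf_norm_le_iff
  by (auto intro: stable_mat_diag_blocks opnorm_eval_diag_blocks_le)

lemma hinf_norm_diag_blocks_le_Max:
  assumes "0 < n" "\<And>i. i < n \<Longrightarrow> hinf_norm (F i) \<le> ereal (b i)"
  shows "hinf_norm (diag_blocks F n) \<le> ereal (Max (b ` {..<n}))"
proof (rule hinf_norm_diag_blocks_le)
  have b_le_Max: "b i \<le> Max (b ` {..<n})" if "i < n" for i
    using that by (intro Max_ge) auto
  show "hinf_norm (F i) \<le> ereal (Max (b ` {..<n}))" if "i < n" for i
    using assms(2)[OF that] b_le_Max[OF that] by (simp add: order_trans)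
  show "0 \<le> Max (b ` {..<n})"
    using hinf_norm_le_imp_nonneg[OF assms(2)] b_le_Max assms(1) order_trans by blast
qed

section \<open>Inverses and well-posed feedback loops\<close>

definition trivial_kernel :: "'a :: field mat \<Rightarrow> nat \<Rightarrow> bool" where
  "trivial_kernel A n \<longleftrightarrow> (\<forall>v \<in> carrier_vec n. A *\<^sub>v v = 0\<^sub>v n \<longrightarrow> v = 0\<^sub>v n)"

lemma trivial_kernel_minv:
  assumes A: "A \<in> carrier_mat n n" and "trivial_kernel A n"
  shows "minv A * A = 1\<^sub>m n" "A * minv A = 1\<^sub>m n" "minv A \<in> carrier_mat n n"
proof -
  have "Determinant.det A \<noteq> 0"
    using det_0_iff_vec_prod_zero_field[OF A] assms(2) unfolding trivial_kernel_def by blast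
  then have "A \<in> Units (ring_mat TYPE(tf) n ())" by (rule det_non_zero_imp_unit[OF A])
  then obtain B where B: "mat_inverse A = Some B"
    using mat_inverse(1)[OF A, of "()"] by (cases "mat_inverse A") auto
  then have "minv A = B" unfolding minv_def by simp
  with mat_inverse(2)[OF A B]
  show "minv A * A = 1\<^sub>m n" "A * minv A = 1\<^sub>m n" "minv A \<in> carrier_mat n n" by auto
qed

lemma invertible_mat_trivial_kernel:
  assumes "invertible_mat M" "M \<in> carrier_mat m m"
  shows "trivial_kernel M m"
  unfolding trivial_kernel_def
proof (intro ballI impI)
  fix w assume w: "w \<in> carrier_vec m" "M *\<^sub>v w = 0\<^sub>v m"
  obtain B where B: "M * B = 1\<^sub>m m" "B * M = 1\<^sub>m (dim_row B)"
    using assms unfolding invertible_mat_def inverts_mat_def by auto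
  have "dim_row B = m" "dim_col B = m"
    using arg_cong[OF B(1), of dim_col] arg_cong[OF B(2), of dim_col] assms(2) by auto
  then have Bc: "B \<in> carrier_mat m m" by auto
  have "w = (B * M) *\<^sub>v w" using B(2) Bc w(1) by simp
  also have "\<dots> = B *\<^sub>v (M *\<^sub>v w)" using Bc assms(2) w(1) by (rule assoc_mult_mat_vec)
  also have "\<dots> = 0\<^sub>v m" using Bc w(2) by (intro eq_vecI) (auto simp: scalar_prod_def)
  finally show "w = 0\<^sub>v m" .
qed

lemma well_posed_fb_trivial_kernel_left:
  assumes P: "P \<in> carrier_mat p q" and K: "K \<in> carrier_mat q p"
    and "well_posed_fb P K"
  shows "trivial_kernel (1\<^sub>m p - P * K) p"
  unfolding trivial_kernel_def
proof (intro ballI impI)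
  fix v assume v: "v \<in> carrier_vec p" and e: "(1\<^sub>m p - P * K) *\<^sub>v v = 0\<^sub>v p"
  let ?w = "v @\<^sub>v (K *\<^sub>v v)"
  have loop: "loop_mat P K = four_block_mat (1\<^sub>m p) (- P) (- K) (1\<^sub>m q)"
    unfolding loop_mat_def using P K by simp
  have M: "loop_mat P K \<in> carrier_mat (p + q) (p + q)" unfolding loop using P K by auto
  have "loop_mat P K *\<^sub>v ?w =
      (1\<^sub>m p *\<^sub>v v + (- P) *\<^sub>v (K *\<^sub>v v)) @\<^sub>v ((- K) *\<^sub>v v + 1\<^sub>m q *\<^sub>v (K *\<^sub>v v))"
    unfolding loop by (rule four_block_mat_mult_vec) (use P K v in auto)
  also have "1\<^sub>m p *\<^sub>v v + (- P) *\<^sub>v (K *\<^sub>v v) = (1\<^sub>m p - P * K) *\<^sub>v v"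
    using P K v by (simp add: minus_mult_distrib_mat_vec[of _ p p] minus_add_uminus_vec[of _ p])
  also have "(- K) *\<^sub>v v + 1\<^sub>m q *\<^sub>v (K *\<^sub>v v) = 0\<^sub>v q"
    using K v by (intro eq_vecI) auto
  finally have "loop_mat P K *\<^sub>v ?w = 0\<^sub>v (p + q)"
    using e by (auto intro!: eq_vecI)
  then have w0: "?w = 0\<^sub>v (p + q)"
    using invertible_mat_trivial_kernel[OF _ M] assms(3) K v
    unfolding well_posed_fb_def trivial_kernel_def by auto
  have "v $ i = 0" if "i < p" for i
    using arg_cong[OF w0, of "\<lambda>x. x $ i"] that v by simp
  then show "v = 0\<^sub>v p" using v by (intro eq_vecI) auto
qed

lemma well_posed_fb_trivial_kernel_right:
  assumes P: "P \<in> carrier_mat p q" and K: "K \<in> carrier_mat q p"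
    and "well_posed_fb P K"
  shows "trivial_kernel (1\<^sub>m q - K * P) q"
  unfolding trivial_kernel_def
proof (intro ballI impI)
  fix v assume v: "v \<in> carrier_vec q" and e: "(1\<^sub>m q - K * P) *\<^sub>v v = 0\<^sub>v q"
  let ?w = "(P *\<^sub>v v) @\<^sub>v v"
  have loop: "loop_mat P K = four_block_mat (1\<^sub>m p) (- P) (- K) (1\<^sub>m q)"
    unfolding loop_mat_def using P K by simp
  have M: "loop_mat P K \<in> carrier_mat (p + q) (p + q)" unfolding loop using P K by auto
  have "loop_mat P K *\<^sub>v ?w =
      (1\<^sub>m p *\<^sub>v (P *\<^sub>v v) + (- P) *\<^sub>v v) @\<^sub>v ((- K) *\<^sub>v (P *\<^sub>v v) + 1\<^sub>m q *\<^sub>v v)"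
    unfolding loop by (rule four_block_mat_mult_vec) (use P K v in auto)
  also have "1\<^sub>m p *\<^sub>v (P *\<^sub>v v) + (- P) *\<^sub>v v = 0\<^sub>v p"
    using P v by (intro eq_vecI) auto
  also have "(- K) *\<^sub>v (P *\<^sub>v v) + 1\<^sub>m q *\<^sub>v v = (1\<^sub>m q - K * P) *\<^sub>v v"
  proof -
    have "(1\<^sub>m q - K * P) *\<^sub>v v = 1\<^sub>m q *\<^sub>v v - K *\<^sub>v (P *\<^sub>v v)"
      using P K v by (simp add: minus_mult_distrib_mat_vec[of _ q q] assoc_mult_mat_vec[of K q p P q v])
    then show ?thesis using P K v by (intro eq_vecI) auto
  qed
  finally have "loop_mat P K *\<^sub>v ?w = 0\<^sub>v (p + q)"
    using e by (auto intro!: eq_vecI)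
  then have w0: "?w = 0\<^sub>v (p + q)"
    using invertible_mat_trivial_kernel[OF _ M] assms(3) P v
    unfolding well_posed_fb_def trivial_kernel_def by auto
  have "v $ i = 0" if "i < q" for i
    using arg_cong[OF w0, of "\<lambda>x. x $ (p + i)"] that P v by simp
  then show "v = 0\<^sub>v q" using v by (intro eq_vecI) auto
qed

lemma solve_fixed_point_eq:
  assumes X: "X \<in> carrier_mat n n" and E: "E \<in> carrier_mat n c" and R: "R \<in> carrier_mat n c"
    and eq: "E = X * E + R" and kernel: "trivial_kernel (1\<^sub>m n - X) n"
  shows "E = minv (1\<^sub>m n - X) * R"
proof -
  have IX: "1\<^sub>m n - X \<in> carrier_mat n n" using X by (intro carrier_matI) auto
  note inv = trivial_kernel_minv[OF IX kernel]
  have "(1\<^sub>m n - X) * E = 1\<^sub>m n * E - X * E"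
    using X E by (intro minus_mult_distrib_mat) auto
  also have "\<dots> = R"
  proof (rule eq_matI)
    fix i j assume ij: "i < dim_row R" "j < dim_col R"
    have "E $$ (i,j) = (X * E + R) $$ (i,j)" using eq by simp
    with ij X E R show "(1\<^sub>m n * E - X * E) $$ (i, j) = R $$ (i, j)" by simp
  qed (use X E R in auto)
  finally have "(1\<^sub>m n - X) * E = R" .
  then have "minv (1\<^sub>m n - X) * R = (minv (1\<^sub>m n - X) * (1\<^sub>m n - X)) * E"
    using inv(3) IX E by (auto intro!: assoc_mult_mat[symmetric])
  also have "\<dots> = E" using inv(1) E by simp
  finally show ?thesis by simp
qed

lemma interconnection_solution:
  assumes G: "G \<in> carrier_mat m n" and L: "L \<in> carrier_mat n m" and wp: "well_posed_fb G L"
    and V: "V \<in> carrier_mat n c" and M: "M \<in> carrier_mat m c"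
    and eq: "V = L * (G * V + M)"
  shows "V = minv (1\<^sub>m n - L * G) * L * M"
proof -
  have kernel: "trivial_kernel (1\<^sub>m n - L * G) n"
    using G L wp by (rule well_posed_fb_trivial_kernel_right)
  have LG: "L * G \<in> carrier_mat n n" and LM: "L * M \<in> carrier_mat n c" using G L M by auto
  have "V = L * (G * V) + L * M"
    using G L V M by (subst eq, intro mult_add_distrib_mat) auto
  also have "\<dots> = (L * G) * V + L * M"
    by (simp add: assoc_mult_mat[OF L G V])
  finally have "V = minv (1\<^sub>m n - L * G) * (L * M)"
    by (rule solve_fixed_point_eq[OF LG V LM _ kernel])
  also have "\<dots> = minv (1\<^sub>m n - L * G) * L * M"
  proof (rule assoc_mult_mat[symmetric])
    show "minv (1\<^sub>m n - L * G) \<in> carrier_mat n n"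
      using LG kernel by (intro trivial_kernel_minv(3)) (auto intro!: carrier_matI)
  qed (use L M in auto)
  finally show ?thesis .
qed

lemma offset_0 [simp]: "offset r 0 = 0"
  and offset_Suc [simp]: "offset r (Suc n) = offset r n + r n"
  unfolding offset_def by simp_all

lemma diag_blocks_carrier:
  "(\<And>i. i < n \<Longrightarrow> F i \<in> carrier_mat (r i) (c i)) \<Longrightarrow>
   diag_blocks F n \<in> carrier_mat (offset r n) (offset c n)"
proof (induct n)
  case (Suc n)
  then have "diag_blocks F n \<in> carrier_mat (offset r n) (offset c n)" "F n \<in> carrier_mat (r n) (c n)"
    by auto
  then show ?case by (intro carrier_matI) auto
qed simp

lemma stack_rows_carrier:
  "(\<And>i. i < n \<Longrightarrow> F i \<in> carrier_mat (r i) c) \<Longrightarrow> stack_rows c F n \<in> carrier_mat (offset r n) c"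
  by (induct n) auto

lemma stack_rows_cong: "(\<And>i. i < n \<Longrightarrow> F i = G i) \<Longrightarrow> stack_rows c F n = stack_rows c G n"
  by (induct n) auto

lemma append_rows_add:
  assumes "A \<in> carrier_mat n1 c" "A' \<in> carrier_mat n1 c" "B \<in> carrier_mat n2 c" "B' \<in> carrier_mat n2 c"
  shows "(A + A') @\<^sub>r (B + B') = (A @\<^sub>r B) + (A' @\<^sub>r B')"
  using assms unfolding append_rows_def by (intro eq_matI) auto

lemma stack_rows_add:
  "(\<And>i. i < n \<Longrightarrow> B i \<in> carrier_mat (r i) c \<and> C i \<in> carrier_mat (r i) c) \<Longrightarrow>
   stack_rows c (\<lambda>i. B i + C i) n = stack_rows c B n + stack_rows c C n"
proof (induct n)
  case 0 then show ?case by (intro eq_matI) auto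
next
  case (Suc n)
  have "stack_rows c B n \<in> carrier_mat (offset r n) c" "stack_rows c C n \<in> carrier_mat (offset r n) c"
    using Suc(2) by (auto intro!: stack_rows_carrier)
  moreover have "B n \<in> carrier_mat (r n) c" "C n \<in> carrier_mat (r n) c" using Suc(2) by auto
  ultimately show ?case using Suc by (simp add: append_rows_add[of _ "offset r n" c _ _ "r n"])
qed

lemma stack_rows_mult:
  "(\<And>i. i < n \<Longrightarrow> A i \<in> carrier_mat (r i) (m i) \<and> B i \<in> carrier_mat (m i) c) \<Longrightarrow>
   stack_rows c (\<lambda>i. A i * B i) n = diag_blocks A n * stack_rows c B n"
proof (induct n)
  case 0 then show ?case by (intro eq_matI) auto
next
  case (Suc n)
  have D: "diag_blocks A n \<in> carrier_mat (offset r n) (offset m n)"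
    using Suc(2) by (auto intro!: diag_blocks_carrier)
  have S: "stack_rows c B n \<in> carrier_mat (offset m n) c"
    using Suc(2) by (auto intro!: stack_rows_carrier)
  have An: "A n \<in> carrier_mat (r n) (m n)" and Bn: "B n \<in> carrier_mat (m n) c" using Suc(2) by auto
  have "diag_blocks A (Suc n) * stack_rows c B (Suc n) =
     four_block_mat (diag_blocks A n) (0\<^sub>m (offset r n) (m n)) (0\<^sub>m (r n) (offset m n)) (A n) *
     four_block_mat (stack_rows c B n) (0\<^sub>m (offset m n) 0) (B n) (0\<^sub>m (m n) 0)"
    using D S An Bn by (simp add: append_rows_def)
  also have "\<dots> = four_block_mat
       (diag_blocks A n * stack_rows c B n + 0\<^sub>m (offset r n) (m n) * B n)
       (diag_blocks A n * 0\<^sub>m (offset m n) 0 + 0\<^sub>m (offset r n) (m n) * 0\<^sub>m (m n) 0)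
       (0\<^sub>m (r n) (offset m n) * stack_rows c B n + A n * B n)
       (0\<^sub>m (r n) (offset m n) * 0\<^sub>m (offset m n) 0 + A n * 0\<^sub>m (m n) 0)"
    by (rule mult_four_block_mat[OF D _ _ An S _ Bn]) auto
  also have "\<dots> = (diag_blocks A n * stack_rows c B n) @\<^sub>r (A n * B n)"
    unfolding append_rows_def using D S An Bn by (intro eq_matI) auto
  finally show ?case using Suc by simp
qed

lemma stack_rows_d_block_prefix:
  "n \<le> N \<Longrightarrow> stack_rows (offset nd N) (d_block nd N) n =
     mat (offset nd n) (offset nd N) (\<lambda>(r,j). if j = r then 1 else 0)"
proof (induct n)
  case 0 then show ?case by (intro eq_matI) auto
next
  case (Suc n)
  then have IH: "stack_rows (offset nd N) (d_block nd N) n =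
      mat (offset nd n) (offset nd N) (\<lambda>(r,j). if j = r then 1 else 0)" by auto
  show ?case unfolding stack_rows.simps IH append_rows_def
    by (intro eq_matI) (auto simp: d_block_def)
qed

lemma stack_rows_d_block: "stack_rows (offset nd N) (d_block nd N) N = 1\<^sub>m (offset nd N)"
  using stack_rows_d_block_prefix[of N N nd] by (intro eq_matI) auto

lemma d_block_carrier: "d_block nd N i \<in> carrier_mat (nd i) (offset nd N)"
  unfolding d_block_def by auto

lemma stack_rows_affine_d_block:
  assumes dims: "\<And>i. i < N \<Longrightarrow>
      G i \<in> carrier_mat (r i) (m i) \<and> V i \<in> carrier_mat (m i) (offset nd N) \<and>
      M i \<in> carrier_mat (r i) (nd i)"
    and eq: "\<And>i. i < N \<Longrightarrow> A i = G i * V i + M i * d_block nd N i"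
  shows "stack_rows (offset nd N) A N =
           diag_blocks G N * stack_rows (offset nd N) V N + diag_blocks M N"
proof -
  let ?c = "offset nd N"
  have "stack_rows ?c A N = stack_rows ?c (\<lambda>i. G i * V i + M i * d_block nd N i) N"
    using eq by (rule stack_rows_cong)
  also have "\<dots> = stack_rows ?c (\<lambda>i. G i * V i) N + stack_rows ?c (\<lambda>i. M i * d_block nd N i) N"
    using dims d_block_carrier
    by (intro stack_rows_add[where r = r]) (auto simp del: mult_carrier_mat intro!: mult_carrier_mat)
  also have "stack_rows ?c (\<lambda>i. G i * V i) N = diag_blocks G N * stack_rows ?c V N"
    using dims by (intro stack_rows_mult[where r = r and m = m]) auto
  also have "stack_rows ?c (\<lambda>i. M i * d_block nd N i) N = diag_blocks M N * 1\<^sub>m ?c"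
    unfolding stack_rows_d_block[symmetric] using dims d_block_carrier
    by (intro stack_rows_mult[where r = r and m = nd]) auto
  also have "diag_blocks M N * 1\<^sub>m ?c = diag_blocks M N"
  proof (rule right_mult_one_mat)
    show "diag_blocks M N \<in> carrier_mat (offset r N) ?c"
      using dims by (intro diag_blocks_carrier) auto
  qed
  finally show ?thesis .
qed

section \<open>Closing the local loops\<close>

lemma Rmat_mult_append_rows:
  assumes "Y \<in> carrier_mat p c" "G \<in> carrier_mat p q" "V \<in> carrier_mat q c"
  shows "Rmat G * (Y @\<^sub>r V) = Y - G * V"
proof -
  have "Rmat G * (Y @\<^sub>r V) =
      four_block_mat (1\<^sub>m p) (- G) (0\<^sub>m 0 p) (0\<^sub>m 0 q) * four_block_mat Y (0\<^sub>m p 0) V (0\<^sub>m q 0)"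
    using assms unfolding Rmat_def append_cols_def append_rows_def by simp
  also have "\<dots> = four_block_mat (1\<^sub>m p * Y + (- G) * V) (1\<^sub>m p * 0\<^sub>m p 0 + (- G) * 0\<^sub>m q 0)
      (0\<^sub>m 0 p * Y + 0\<^sub>m 0 q * V) (0\<^sub>m 0 p * 0\<^sub>m p 0 + 0\<^sub>m 0 q * 0\<^sub>m q 0)"
    by (rule mult_four_block_mat) (use assms in auto)
  also have "\<dots> = Y - G * V" using assms by (intro eq_matI) auto
  finally show ?thesis .
qed

lemma Mhat_carrier:
  assumes "Gad \<in> carrier_mat na nd" "Gau \<in> carrier_mat na nu" "Gyu \<in> carrier_mat ny nu"
    "Gyd \<in> carrier_mat ny nd" "K \<in> carrier_mat nu ny" "well_posed_fb Gyu K"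
  shows "Mhat Gad Gau Gyu Gyd K \<in> carrier_mat na nd"
proof -
  have "minv (1\<^sub>m ny - Gyu * K) \<in> carrier_mat ny ny"
    using assms well_posed_fb_trivial_kernel_left[of Gyu ny nu K]
    by (intro trivial_kernel_minv(3)) auto
  with assms show ?thesis unfolding Mhat_def by (intro add_carrier_mat mult_carrier_mat) auto
qed

text \<open>With \<open>e = y - G\<^sub>y\<^sub>v v\<close> the local controller reads \<open>u = K e\<close>, and \<open>e\<close> solves the
  loop equation \<open>e = G\<^sub>y\<^sub>u K e + G\<^sub>y\<^sub>d d\<close>; this is where the measurability of \<open>v\<close> enters.\<close>

lemma local_loop_output_eq:
  assumes Ga: "Ga \<in> carrier_mat na nv" and Gad: "Gad \<in> carrier_mat na nd"
    and Gau: "Gau \<in> carrier_mat na nu" and Gyv: "Gyv \<in> carrier_mat ny nv"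
    and Gyd: "Gyd \<in> carrier_mat ny nd" and Gyu: "Gyu \<in> carrier_mat ny nu"
    and K: "K \<in> carrier_mat nu ny" and D: "D \<in> carrier_mat nd c"
    and V: "V \<in> carrier_mat nv c" and Y: "Y \<in> carrier_mat ny c" and U: "U \<in> carrier_mat nu c"
    and eA: "A = Ga * V + Gad * D + Gau * U"
    and eY: "Y = Gyv * V + Gyd * D + Gyu * U"
    and eU: "U = K * Rmat Gyv * (Y @\<^sub>r V)"
    and wp: "well_posed_fb Gyu K"
  shows "A = Ga * V + Mhat Gad Gau Gyu Gyd K * D"
proof -
  define E where "E = Y - Gyv * V"
  define Mi where "Mi = minv (1\<^sub>m ny - Gyu * K)"
  have Ec: "E \<in> carrier_mat ny c" unfolding E_def using Y Gyv V by auto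
  have kernel: "trivial_kernel (1\<^sub>m ny - Gyu * K) ny"
    using Gyu K wp by (rule well_posed_fb_trivial_kernel_left)
  have Mi: "Mi \<in> carrier_mat ny ny"
    unfolding Mi_def using Gyu K kernel by (intro trivial_kernel_minv(3)) auto
  have R: "Rmat Gyv \<in> carrier_mat ny (ny + nv)"
    unfolding Rmat_def append_cols_def using Gyv by auto
  have UE: "U = K * E"
    unfolding eU E_def using assoc_mult_mat[OF K R, of "Y @\<^sub>r V" c] Rmat_mult_append_rows[OF Y Gyv V] Y V
    by simp
  have "E = (Gyu * K) * E + Gyd * D"
  proof -
    have "(Gyu * K) * E = Gyu * U" unfolding UE using Gyu K Ec by (rule assoc_mult_mat)
    then show ?thesis unfolding E_def using eY Y Gyv V Gyd D Gyu U by (intro eq_matI) auto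
  qed
  then have E: "E = Mi * (Gyd * D)"
    unfolding Mi_def by (intro solve_fixed_point_eq[OF _ Ec _ _ kernel]) (use Gyu K Gyd D in auto)
  have "Gau * U = Gau * (K * (Mi * (Gyd * D)))" unfolding UE E ..
  also have "\<dots> = (Gau * K) * (Mi * (Gyd * D))"
    using Gau K Mi Gyd D by (intro assoc_mult_mat[symmetric]) auto
  also have "\<dots> = (Gau * K * Mi) * (Gyd * D)"
    using Gau K Mi Gyd D by (intro assoc_mult_mat[symmetric]) auto
  also have "\<dots> = Gau * K * Mi * Gyd * D"
    using Gau K Mi Gyd D by (intro assoc_mult_mat[symmetric]) auto
  finally have "Gau * U = Gau * K * Mi * Gyd * D" .
  moreover have "Mhat Gad Gau Gyu Gyd K * D = Gad * D + Gau * K * Mi * Gyd * D"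
    unfolding Mhat_def carrier_matD(1)[OF Gyu] Mi_def[symmetric] using Gad Gau K Mi Gyd D
    by (intro add_mult_distrib_mat) auto
  ultimately show ?thesis unfolding eA using Ga V Gad D Gau K Mi Gyd
    by (intro eq_matI) auto
qed

section \<open>The closed loop of the network\<close>

lemma network_solution_subsystem:
  assumes sol: "network_solution N nv nd nu nw nz ny Gwv Gwd Gwu Gzv Gzd Gzu Gyv Gyd Gyu K L V W Z Y U"
    and dims: "\<And>i. i < N \<Longrightarrow>
        Gwv i \<in> carrier_mat (nw i) (nv i) \<and> Gwd i \<in> carrier_mat (nw i) (nd i) \<and>
        Gwu i \<in> carrier_mat (nw i) (nu i) \<and>
        Gzv i \<in> carrier_mat (nz i) (nv i) \<and> Gzd i \<in> carrier_mat (nz i) (nd i) \<and>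
        Gzu i \<in> carrier_mat (nz i) (nu i) \<and>
        Gyv i \<in> carrier_mat (ny i) (nv i) \<and> Gyd i \<in> carrier_mat (ny i) (nd i) \<and>
        Gyu i \<in> carrier_mat (ny i) (nu i) \<and>
        K i \<in> carrier_mat (nu i) (ny i)"
    and wp: "well_posed_fb (Gyu i) (K i)" and i: "i < N"
  shows "V i \<in> carrier_mat (nv i) (offset nd N)"
    and "W i = Gwv i * V i + Mhat (Gwd i) (Gwu i) (Gyu i) (Gyd i) (K i) * d_block nd N i"
    and "Z i = Gzv i * V i + Mhat (Gzd i) (Gzu i) (Gyu i) (Gyd i) (K i) * d_block nd N i"
proof -
  let ?c = "offset nd N"
  have loop: "V i \<in> carrier_mat (nv i) ?c \<and> W i \<in> carrier_mat (nw i) ?c \<and>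
      Z i \<in> carrier_mat (nz i) ?c \<and> Y i \<in> carrier_mat (ny i) ?c \<and>
      U i \<in> carrier_mat (nu i) ?c \<and>
      W i = Gwv i * V i + Gwd i * d_block nd N i + Gwu i * U i \<and>
      Z i = Gzv i * V i + Gzd i * d_block nd N i + Gzu i * U i \<and>
      Y i = Gyv i * V i + Gyd i * d_block nd N i + Gyu i * U i \<and>
      U i = K i * Rmat (Gyv i) * (Y i @\<^sub>r V i)"
    using sol i unfolding network_solution_def Let_def by blast
  then show "V i \<in> carrier_mat (nv i) ?c" by blast
  show "W i = Gwv i * V i + Mhat (Gwd i) (Gwu i) (Gyu i) (Gyd i) (K i) * d_block nd N i"
    using dims[OF i] loop wp d_block_carrier
    by (intro local_loop_output_eq[of _ "nw i" "nv i" _ "nd i" _ "nu i" _ "ny i"]) blast+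
  show "Z i = Gzv i * V i + Mhat (Gzd i) (Gzu i) (Gyu i) (Gyd i) (K i) * d_block nd N i"
    using dims[OF i] loop wp d_block_carrier
    by (intro local_loop_output_eq[of _ "nz i" "nv i" _ "nd i" _ "nu i" _ "ny i"]) blast+
qed

lemma network_solution_transfer_eq:
  assumes dims: "\<And>i. i < N \<Longrightarrow>
        Gwv i \<in> carrier_mat (nw i) (nv i) \<and> Gwd i \<in> carrier_mat (nw i) (nd i) \<and>
        Gwu i \<in> carrier_mat (nw i) (nu i) \<and>
        Gzv i \<in> carrier_mat (nz i) (nv i) \<and> Gzd i \<in> carrier_mat (nz i) (nd i) \<and>
        Gzu i \<in> carrier_mat (nz i) (nu i) \<and>
        Gyv i \<in> carrier_mat (ny i) (nv i) \<and> Gyd i \<in> carrier_mat (ny i) (nd i) \<and>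
        Gyu i \<in> carrier_mat (ny i) (nu i) \<and>
        K i \<in> carrier_mat (nu i) (ny i)"
    and L: "L \<in> carrier_mat (offset nv N) (offset nw N)"
    and local_wp: "\<And>i. i < N \<Longrightarrow> well_posed_fb (Gyu i) (K i)"
    and pre_wp: "well_posed_fb (diag_blocks Gwv N) L"
    and sol: "network_solution N nv nd nu nw nz ny Gwv Gwd Gwu Gzv Gzd Gzu Gyv Gyd Gyu K L V W Z Y U"
  shows "stack_rows (offset nd N) Z N =
      diag_blocks Gzv N * minv (1\<^sub>m (offset nv N) - L * diag_blocks Gwv N) * L *
        diag_blocks (\<lambda>i. Mhat (Gwd i) (Gwu i) (Gyu i) (Gyd i) (K i)) N +
      diag_blocks (\<lambda>i. Mhat (Gzd i) (Gzu i) (Gyu i) (Gyd i) (K i)) N"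
    (is "?Z = ?Gzv * ?Mi * L * ?Mw + ?Mz")
proof -
  let ?c = "offset nd N"
  let ?V = "stack_rows ?c V N" and ?W = "stack_rows ?c W N"
  note subsystem = network_solution_subsystem[OF sol dims local_wp]
  have Mhat: "Mhat (Gwd i) (Gwu i) (Gyu i) (Gyd i) (K i) \<in> carrier_mat (nw i) (nd i)"
    "Mhat (Gzd i) (Gzu i) (Gyu i) (Gyd i) (K i) \<in> carrier_mat (nz i) (nd i)" if "i < N" for i
    using dims[OF that] local_wp[OF that] by (auto intro!: Mhat_carrier)
  have Gwv: "diag_blocks Gwv N \<in> carrier_mat (offset nw N) (offset nv N)"
    using dims by (intro diag_blocks_carrier) blast
  have Gzv: "?Gzv \<in> carrier_mat (offset nz N) (offset nv N)"
    using dims by (intro diag_blocks_carrier) blast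
  have Mw: "?Mw \<in> carrier_mat (offset nw N) ?c"
    using Mhat by (intro diag_blocks_carrier) blast
  have "trivial_kernel (1\<^sub>m (offset nv N) - L * diag_blocks Gwv N) (offset nv N)"
    using Gwv L pre_wp by (rule well_posed_fb_trivial_kernel_right)
  then have Mi: "?Mi \<in> carrier_mat (offset nv N) (offset nv N)"
    using Gwv L by (intro trivial_kernel_minv(3)) (auto intro!: carrier_matI)
  have V: "?V \<in> carrier_mat (offset nv N) ?c"
    using subsystem(1) by (intro stack_rows_carrier) blast
  have "?V = L * ?W" using sol unfolding network_solution_def Let_def by blast
  moreover have "?W = diag_blocks Gwv N * ?V + ?Mw"
    using dims Mhat subsystem by (intro stack_rows_affine_d_block[where m = nv]) blast+
  ultimately have "?V = ?Mi * L * ?Mw"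
    using interconnection_solution[OF Gwv L pre_wp V Mw] by simp
  moreover have "?Z = ?Gzv * ?V + ?Mz"
    using dims Mhat subsystem by (intro stack_rows_affine_d_block[where m = nv]) blast+
  moreover have "?Gzv * (?Mi * L * ?Mw) = ?Gzv * (?Mi * L) * ?Mw"
    using Gzv Mi L Mw by (intro assoc_mult_mat[symmetric]) auto
  moreover have "?Gzv * (?Mi * L) = ?Gzv * ?Mi * L"
    using Gzv Mi L by (intro assoc_mult_mat[symmetric]) auto
  ultimately show ?thesis by simp
qed

theorem proposition4:
  fixes N :: nat
    and nv nd nu nw nz ny :: "nat \<Rightarrow> nat"
    and Gwv Gwd Gwu Gzv Gzd Gzu Gyv Gyd Gyu K :: "nat \<Rightarrow> tf mat"
    and L :: "tf mat"
    and \<alpha> \<beta> :: "nat \<Rightarrow> real" and \<delta> :: real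
    and V W Z Y U :: "nat \<Rightarrow> tf mat"
  assumes N: "N > 0"
    and dims: "\<And>i. i < N \<Longrightarrow>
        Gwv i \<in> carrier_mat (nw i) (nv i) \<and> Gwd i \<in> carrier_mat (nw i) (nd i) \<and>
        Gwu i \<in> carrier_mat (nw i) (nu i) \<and>
        Gzv i \<in> carrier_mat (nz i) (nv i) \<and> Gzd i \<in> carrier_mat (nz i) (nd i) \<and>
        Gzu i \<in> carrier_mat (nz i) (nu i) \<and>
        Gyv i \<in> carrier_mat (ny i) (nv i) \<and> Gyd i \<in> carrier_mat (ny i) (nd i) \<and>
        Gyu i \<in> carrier_mat (ny i) (nu i) \<and>
        K i \<in> carrier_mat (nu i) (ny i)"
    and L_dim: "L \<in> carrier_mat (offset nv N) (offset nw N)"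
    and G_proper: "\<And>i. i < N \<Longrightarrow>
        proper_mat (Gwv i) \<and> proper_mat (Gwd i) \<and> proper_mat (Gwu i) \<and>
        proper_mat (Gzv i) \<and> proper_mat (Gzd i) \<and> proper_mat (Gzu i) \<and>
        proper_mat (Gyv i) \<and> proper_mat (Gyd i) \<and> proper_mat (Gyu i)"
    and L_proper: "proper_mat L"
    and K_stab: "\<And>i. i < N \<Longrightarrow> stabilizing (K i) (Gyu i)"
    and pre_stable: "internally_stable_fb (diag_blocks Gwv N) L"
    and net_wp: "network_well_posed N nv nd nu nw nz ny Gwv Gwd Gwu Gzv Gzd Gzu Gyv Gyd Gyu K L"
    and delta_nonneg: "\<delta> \<ge> 0"
    and delta_bound: "hinf_norm (diag_blocks Gzv N *
        minv (1\<^sub>m (offset nv N) - L * diag_blocks Gwv N) * L) \<le> ereal \<delta>"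
    and alpha: "\<And>i. i < N \<Longrightarrow> hinf_norm (Mhat (Gzd i) (Gzu i) (Gyu i) (Gyd i) (K i)) \<le> ereal (\<alpha> i)"
    and beta: "\<And>i. i < N \<Longrightarrow> hinf_norm (Mhat (Gwd i) (Gwu i) (Gyu i) (Gyd i) (K i)) \<le> ereal (\<beta> i)"
    and sol: "network_solution N nv nd nu nw nz ny Gwv Gwd Gwu Gzv Gzd Gzu Gyv Gyd Gyu K L V W Z Y U"
  shows "hinf_norm (stack_rows (offset nd N) Z N)
           \<le> ereal (Max (\<alpha> ` {..<N}) + \<delta> * Max (\<beta> ` {..<N}))"
proof -
  let ?P = "diag_blocks Gzv N * minv (1\<^sub>m (offset nv N) - L * diag_blocks Gwv N) * L"
  let ?Mw = "diag_blocks (\<lambda>i. Mhat (Gwd i) (Gwu i) (Gyu i) (Gyd i) (K i)) N"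
  let ?Mz = "diag_blocks (\<lambda>i. Mhat (Gzd i) (Gzu i) (Gyu i) (Gyd i) (K i)) N"
  have local_wp: "well_posed_fb (Gyu i) (K i)" if "i < N" for i
    using K_stab[OF that] unfolding stabilizing_def internally_stable_fb_def by blast
  have pre_wp: "well_posed_fb (diag_blocks Gwv N) L"
    using pre_stable unfolding internally_stable_fb_def by blast
  have "Mhat (Gwd i) (Gwu i) (Gyu i) (Gyd i) (K i) \<in> carrier_mat (nw i) (nd i)"
    "Mhat (Gzd i) (Gzu i) (Gyu i) (Gyd i) (K i) \<in> carrier_mat (nz i) (nd i)" if "i < N" for i
    using dims[OF that] local_wp[OF that] by (auto intro!: Mhat_carrier)
  then have Mw: "?Mw \<in> carrier_mat (offset nw N) (offset nd N)"
    and Mz: "?Mz \<in> carrier_mat (offset nz N) (offset nd N)"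
    by (auto intro!: diag_blocks_carrier)
  have Gzv: "diag_blocks Gzv N \<in> carrier_mat (offset nz N) (offset nv N)"
    using dims by (intro diag_blocks_carrier) blast
  have "hinf_norm ?Mw \<le> ereal (Max (\<beta> ` {..<N}))"
    using N beta by (rule hinf_norm_diag_blocks_le_Max)
  then have "hinf_norm (?P * ?Mw) \<le> ereal (\<delta> * Max (\<beta> ` {..<N}))"
    using L_dim Mw by (intro hinf_norm_mult_le[OF delta_bound]) auto
  moreover have "hinf_norm ?Mz \<le> ereal (Max (\<alpha> ` {..<N}))"
    using N alpha by (rule hinf_norm_diag_blocks_le_Max)
  ultimately have "hinf_norm (?P * ?Mw + ?Mz) \<le> ereal (\<delta> * Max (\<beta> ` {..<N}) + Max (\<alpha> ` {..<N}))"
    using Gzv Mw Mz by (intro hinf_norm_add_le) auto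
  then show ?thesis
    using network_solution_transfer_eq[OF dims L_dim local_wp pre_wp sol] by (simp add: add.commute)
qed

end
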